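(* Let $A\in\mathbb{R}^{m\times n}$ and let $A=P_1-R_1+S_1=P_2-R_2+S_2$ be two double proper regular (respectively, double proper weak regular) splittings of $A$ such that $N(R_2)\supseteq N(P_2)$, $R(R_2)\subseteq R(P_2)$, $-1\notin\sigma(R_2P_1^{\dagger})$ and $\widehat{\mathcal{A}}^{\dagger}\geq 0$, where $\widehat{\mathcal{A}}=(I+R_2P_1^{\dagger})A$. Then $\rho(\mathcal{W}_{12})<1$, where $$\mathcal{W}_{12}=\begin{pmatrix} P_2^{\dagger}R_2P_1^{\dagger}R_1-P_2^{\dagger}S_2 & -P_2^{\dagger}R_2P_1^{\dagger}S_1\\ I & 0\end{pmatrix}.$$
   Context: For $M\in\mathbb{R}^{m\times n}$, $M^{\dagger}$ is its Moore–Penrose inverse, $R(M)$, $N(M)$ its range and null space; inequalities are entrywise; $\rho$ is the spectral radius, $\sigma$ the spectrum. A double splitting $A=P-R+S$ is a double proper splitting if $R(P)=R(A)$ and $N(P)=N(A)$; it is double proper regular if moreover $P^{\dagger}\geq0$, $R\geq0$, $S\leq0$; double proper weak regular if moreover $P^{\dagger}\geq 0$, $P^{\dagger}R\geq 0$, $P^{\dagger}S\leq 0$. *)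

theory Defs
  imports "Jordan_Normal_Form.Spectral_Radius"
begin

definition mp_inverse :: "real mat \<Rightarrow> real mat" where
  "mp_inverse M = (THE X. X \<in> carrier_mat (dim_col M) (dim_row M) \<and>
      M * X * M = M \<and> X * M * X = X \<and>
      transpose_mat (M * X) = M * X \<and> transpose_mat (X * M) = X * M)"

definition range_mat :: "real mat \<Rightarrow> real vec set" where
  "range_mat M = {M *\<^sub>v x | x. x \<in> carrier_vec (dim_col M)}"

definition null_mat :: "real mat \<Rightarrow> real vec set" where
  "null_mat M = {x \<in> carrier_vec (dim_col M). M *\<^sub>v x = 0\<^sub>v (dim_row M)}"

definition nonneg_mat :: "real mat \<Rightarrow> bool" where
  "nonneg_mat M = (\<forall>i < dim_row M. \<forall>j < dim_col M. M $$ (i, j) \<ge> 0)"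

definition nonpos_mat :: "real mat \<Rightarrow> bool" where
  "nonpos_mat M = (\<forall>i < dim_row M. \<forall>j < dim_col M. M $$ (i, j) \<le> 0)"

definition real_spectrum :: "real mat \<Rightarrow> complex set" where
  "real_spectrum M = spectrum (map_mat complex_of_real M)"

definition real_spectral_radius :: "real mat \<Rightarrow> real" where
  "real_spectral_radius M = spectral_radius (map_mat complex_of_real M)"

definition double_proper_splitting :: "real mat \<Rightarrow> real mat \<Rightarrow> real mat \<Rightarrow> real mat \<Rightarrow> bool" where
  "double_proper_splitting A P R S =
     (P \<in> carrier_mat (dim_row A) (dim_col A) \<and> R \<in> carrier_mat (dim_row A) (dim_col A) \<and>
      S \<in> carrier_mat (dim_row A) (dim_col A) \<and>
      A = P - R + S \<and> range_mat P = range_mat A \<and> null_mat P = null_mat A)"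

definition double_proper_regular :: "real mat \<Rightarrow> real mat \<Rightarrow> real mat \<Rightarrow> real mat \<Rightarrow> bool" where
  "double_proper_regular A P R S =
     (double_proper_splitting A P R S \<and> nonneg_mat (mp_inverse P) \<and> nonneg_mat R \<and> nonpos_mat S)"

definition double_proper_weak_regular :: "real mat \<Rightarrow> real mat \<Rightarrow> real mat \<Rightarrow> real mat \<Rightarrow> bool" where
  "double_proper_weak_regular A P R S =
     (double_proper_splitting A P R S \<and> nonneg_mat (mp_inverse P) \<and>
      nonneg_mat (mp_inverse P * R) \<and> nonpos_mat (mp_inverse P * S))"

end

theory Submission
  imports Defs
begin

text \<open>Write \<open>X\<^sub>i = P\<^sub>i\<^sup>\<dagger>\<close>, \<open>\<A> = (I + R\<^sub>2X\<^sub>1)A\<close>, let \<open>K\<close> and \<open>L\<close> be the two upper blocks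
  of \<open>\<W>\<^sub>1\<^sub>2\<close> and \<open>G = K + L\<close>. The (weak) regularity of the splittings gives \<open>X\<^sub>2, K, L \<ge> 0\<close>.
  The matrix \<open>I + R\<^sub>2X\<^sub>1\<close> is injective and maps \<open>R(A)\<close> into itself, so \<open>\<A>\<close> has the same
  range and null space as \<open>A\<close>, hence as \<open>P\<^sub>2\<close>; together with \<open>N(P\<^sub>2) \<subseteq> N(R\<^sub>2)\<close> this yields
  \<open>G = X\<^sub>2(P\<^sub>2 - \<A>)\<close> and \<open>(I - G)\<A>\<^sup>\<dagger> = X\<^sub>2\<close>.

  If \<open>\<lambda>\<close> is an eigenvalue of \<open>\<W>\<^sub>1\<^sub>2\<close> with \<open>|\<lambda>| \<ge> 1\<close> and \<open>(y, z)\<close> a left eigenvector for it,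
  then \<open>\<lambda>\<^sup>2y = \<lambda>K\<^sup>Ty + L\<^sup>Ty\<close>, so \<open>w = |y|\<close> satisfies \<open>0 \<le> w \<le> G\<^sup>Tw\<close>. Since
  \<open>X\<^sub>2\<^sup>T = \<A>\<^sup>\<dagger>\<^sup>T(I - G\<^sup>T)\<close> and \<open>\<A>\<^sup>\<dagger> \<ge> 0\<close>, the nonnegative vectors \<open>\<A>\<^sup>\<dagger>\<^sup>T(G\<^sup>T)\<^sup>kw\<close> decrease by at
  least \<open>X\<^sub>2\<^sup>Tw \<ge> 0\<close> in each step. Hence \<open>X\<^sub>2\<^sup>Tw = 0\<close>, so \<open>G\<^sup>Tw = (P\<^sub>2 - \<A>)\<^sup>TX\<^sub>2\<^sup>Tw = 0\<close>, which
  forces \<open>w = 0\<close> and then \<open>z = 0\<close>.\<close>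

lemma assoc_mult_mat_dim:
  assumes "dim_col A = dim_row B" "dim_col B = dim_row C"
  shows "A * B * C = A * (B * (C :: 'a::semiring_0 mat))"
  using assms by (intro assoc_mult_mat[OF carrier_mat_triv carrier_matI carrier_matI]) auto

lemma transpose_mult_dim:
  assumes "dim_col A = dim_row B"
  shows "transpose_mat (A * B) = transpose_mat B * transpose_mat (A :: 'a :: comm_semiring_0 mat)"
  using assms by (intro transpose_mult[OF carrier_mat_triv carrier_matI]) auto

lemma assoc_mult_mat_vec_dim:
  assumes "dim_col A = dim_row B" "dim_col B = dim_vec v"
  shows "(A * B) *\<^sub>v v = A *\<^sub>v (B *\<^sub>v (v :: 'a::semiring_0 vec))"
  using assms by (intro assoc_mult_mat_vec[OF carrier_mat_triv carrier_matI carrier_vecI]) auto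

lemma mult_smult_assoc_dim:
  "dim_col A = dim_row B \<Longrightarrow> (k \<cdot>\<^sub>m A) * B = (k :: 'a :: comm_semiring_0) \<cdot>\<^sub>m (A * B)"
  by (rule mult_smult_assoc_mat[OF carrier_mat_triv carrier_matI]) auto

lemma mult_smult_distrib_dim:
  "dim_col A = dim_row B \<Longrightarrow> A * (k \<cdot>\<^sub>m B) = (k :: 'a :: comm_semiring_0) \<cdot>\<^sub>m (A * B)"
  by (rule mult_smult_distrib[OF carrier_mat_triv carrier_matI]) auto

lemma add_mult_distrib_dim:
  "dim_row A = dim_row B \<Longrightarrow> dim_col A = dim_col B \<Longrightarrow> dim_col A = dim_row C \<Longrightarrow>
   (A + B) * C = A * C + B * (C :: 'a :: semiring_0 mat)"
  by (rule add_mult_distrib_mat[OF carrier_mat_triv carrier_matI carrier_matI]) auto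

lemma mult_add_distrib_dim:
  "dim_row B = dim_row C \<Longrightarrow> dim_col B = dim_col C \<Longrightarrow> dim_col A = dim_row B \<Longrightarrow>
   A * (B + C) = A * B + A * (C :: 'a :: semiring_0 mat)"
  by (rule mult_add_distrib_mat[OF carrier_mat_triv carrier_matI carrier_matI]) auto

lemma minus_mult_distrib_dim:
  "dim_row A = dim_row B \<Longrightarrow> dim_col A = dim_col B \<Longrightarrow> dim_col A = dim_row C \<Longrightarrow>
   (A - B) * C = A * C - B * (C :: 'a :: ring mat)"
  by (rule minus_mult_distrib_mat[OF carrier_mat_triv carrier_matI carrier_matI]) auto

lemma mult_minus_distrib_dim:
  "dim_row B = dim_row C \<Longrightarrow> dim_col B = dim_col C \<Longrightarrow> dim_col A = dim_row B \<Longrightarrow>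
   A * (B - C) = A * B - A * (C :: 'a :: ring mat)"
  by (rule mult_minus_distrib_mat[OF carrier_mat_triv carrier_matI carrier_matI]) auto

lemma transpose_add_dim:
  "dim_row A = dim_row B \<Longrightarrow> dim_col A = dim_col B \<Longrightarrow>
   transpose_mat (A + B) = transpose_mat A + transpose_mat B"
  by (rule transpose_add[OF carrier_mat_triv carrier_matI]) auto

lemma transpose_minus_dim:
  "dim_row A = dim_row B \<Longrightarrow> dim_col A = dim_col B \<Longrightarrow>
   transpose_mat (A - B) = transpose_mat A - transpose_mat (B :: 'a :: ab_group_add mat)"
  by (rule transpose_minus[OF carrier_mat_triv carrier_matI]) auto

lemma transpose_smult_mat: "transpose_mat (k \<cdot>\<^sub>m A) = k \<cdot>\<^sub>m transpose_mat A"
  by (intro eq_matI) auto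

lemmas mat_algebra_dim = assoc_mult_mat_dim transpose_mult_dim mult_smult_assoc_dim
  mult_smult_distrib_dim add_mult_distrib_dim mult_add_distrib_dim minus_mult_distrib_dim
  mult_minus_distrib_dim transpose_add_dim transpose_minus_dim transpose_smult_mat

lemma mult_unit_vec_index:
  assumes "A \<in> carrier_mat nr nc" "i < nr" "j < nc"
  shows "(A *\<^sub>v unit_vec nc j) $ i = (A $$ (i, j) :: 'a :: comm_ring_1)"
proof -
  have "(A *\<^sub>v unit_vec nc j) $ i = (\<Sum>l\<in>{0..<nc}. A $$ (i, l) * (if l = j then 1 else 0))"
    using assms by (simp add: scalar_prod_def unit_vec_def)
  also have "\<dots> = (\<Sum>l\<in>{0..<nc}. if l = j then A $$ (i, l) else 0)"
    by (rule sum.cong) auto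
  also have "\<dots> = A $$ (i, j)" using assms by simp
  finally show ?thesis .
qed

lemma eq_matI_mult_vec:
  assumes "A \<in> carrier_mat nr nc" "B \<in> carrier_mat nr nc"
    "\<And>v. v \<in> carrier_vec nc \<Longrightarrow> A *\<^sub>v v = B *\<^sub>v (v :: 'a :: comm_ring_1 vec)"
  shows "A = B"
proof (rule eq_matI)
  fix i j assume "i < dim_row B" "j < dim_col B"
  then show "A $$ (i, j) = B $$ (i, j)"
    using assms mult_unit_vec_index[of A nr nc i j] mult_unit_vec_index[of B nr nc i j] by simp
qed (use assms in auto)

lemma eq_mat_of_minus_eq_zero:
  assumes "A \<in> carrier_mat r c" "B \<in> carrier_mat r c" "A - B = 0\<^sub>m r c"
  shows "A = (B :: 'a :: ab_group_add mat)"
proof (rule eq_matI)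
  fix i j assume "i < dim_row B" "j < dim_col B"
  then have "(A - B) $$ (i, j) = 0" using assms by simp
  with \<open>i < dim_row B\<close> \<open>j < dim_col B\<close> show "A $$ (i, j) = B $$ (i, j)" by simp
qed (use assms in auto)

lemma eq_vec_of_minus_eq_zero:
  assumes "a \<in> carrier_vec k" "b \<in> carrier_vec k" "a - b = 0\<^sub>v k"
  shows "a = (b :: 'a :: ab_group_add vec)"
proof (rule eq_vecI)
  fix i assume "i < dim_vec b"
  then have "(a - b) $ i = 0" using assms by simp
  with \<open>i < dim_vec b\<close> show "a $ i = b $ i" by simp
qed (use assms in auto)

lemma transpose_mult_self_eq_zero:
  fixes Z :: "real mat"
  assumes Z: "Z \<in> carrier_mat a b" and ZZ: "transpose_mat Z * Z = 0\<^sub>m b b"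
  shows "Z = 0\<^sub>m a b"
proof (rule eq_matI)
  fix i j assume i: "i < dim_row (0\<^sub>m a b :: real mat)" and j: "j < dim_col (0\<^sub>m a b :: real mat)"
  have "(\<Sum>l\<in>{0..<a}. Z $$ (l, j) * Z $$ (l, j)) = (transpose_mat Z * Z) $$ (j, j)"
    using Z i j by (simp add: scalar_prod_def)
  also have "\<dots> = 0" using ZZ i j by simp
  finally have "\<forall>l\<in>{0..<a}. Z $$ (l, j) * Z $$ (l, j) = 0"
    by (subst sum_nonneg_eq_0_iff[symmetric]) auto
  then show "Z $$ (i, j) = 0\<^sub>m a b $$ (i, j)" using i j by simp
qed (use Z in auto)

lemma pow_mat_Suc_left:
  assumes N: "N \<in> carrier_mat k k"
  shows "N ^\<^sub>m Suc j = N * N ^\<^sub>m j"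
proof (induction j)
  case (Suc j)
  have "N ^\<^sub>m Suc (Suc j) = (N * N ^\<^sub>m j) * N" using Suc by simp
  also have "\<dots> = N * (N ^\<^sub>m j * N)" using N by (simp add: assoc_mult_mat_dim)
  finally show ?case by simp
qed (use N in simp)

lemma pow_mat_add:
  assumes N: "N \<in> carrier_mat k k"
  shows "N ^\<^sub>m (a + b) = N ^\<^sub>m a * N ^\<^sub>m b"
proof (induction b)
  case (Suc b)
  have "N ^\<^sub>m (a + Suc b) = (N ^\<^sub>m a * N ^\<^sub>m b) * N" using Suc by simp
  also have "\<dots> = N ^\<^sub>m a * (N ^\<^sub>m b * N)" using N by (simp add: assoc_mult_mat_dim)
  finally show ?case by simp
qed (use N in simp)

lemma pow_mat_commute:
  assumes N: "N \<in> carrier_mat k k" and Y: "Y \<in> carrier_mat k k" and YN: "Y * N = N * Y"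
  shows "Y * N ^\<^sub>m j = N ^\<^sub>m j * Y"
proof (induction j)
  case (Suc j)
  have "Y * N ^\<^sub>m Suc j = (Y * N ^\<^sub>m j) * N" using N Y by (simp add: assoc_mult_mat_dim)
  also have "\<dots> = N ^\<^sub>m j * (Y * N)" using Suc N Y by (simp add: assoc_mult_mat_dim)
  also have "\<dots> = N ^\<^sub>m Suc j * Y" using YN N Y by (simp add: assoc_mult_mat_dim)
  finally show ?case .
qed (use N Y in simp)

lemma transpose_pow_mat_sym:
  assumes N: "(N :: real mat) \<in> carrier_mat k k" and sym: "transpose_mat N = N"
  shows "transpose_mat (N ^\<^sub>m j) = N ^\<^sub>m j"
proof (induction j)
  case (Suc j)
  have "transpose_mat (N ^\<^sub>m Suc j) = transpose_mat N * transpose_mat (N ^\<^sub>m j)"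
    using N by (simp add: transpose_mult_dim)
  also have "\<dots> = N ^\<^sub>m Suc j" using Suc sym pow_mat_Suc_left[OF N] by simp
  finally show ?case .
qed (use N in simp)

section \<open>The Moore--Penrose inverse\<close>

definition is_mp_inverse :: "real mat \<Rightarrow> real mat \<Rightarrow> bool" where
  "is_mp_inverse M X \<longleftrightarrow> X \<in> carrier_mat (dim_col M) (dim_row M) \<and> M * X * M = M \<and>
     X * M * X = X \<and> transpose_mat (M * X) = M * X \<and> transpose_mat (X * M) = X * M"

lemma is_mp_inverse_carrier: "is_mp_inverse M X \<Longrightarrow> M \<in> carrier_mat r c \<Longrightarrow> X \<in> carrier_mat c r"
  unfolding is_mp_inverse_def by auto

lemma is_mp_inverse_unique:
  assumes X: "is_mp_inverse M X" and Y: "is_mp_inverse M Y"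
  shows "X = Y"
proof -
  have d: "dim_row X = dim_col M" "dim_col X = dim_row M" "dim_row Y = dim_col M" "dim_col Y = dim_row M"
    using X Y unfolding is_mp_inverse_def by auto
  from X have x1: "M * X * M = M" and x2: "X * M * X = X" and x3: "transpose_mat (M * X) = M * X"
    and x4: "transpose_mat (X * M) = X * M" unfolding is_mp_inverse_def by auto
  from Y have y1: "M * Y * M = M" and y2: "Y * M * Y = Y" and y3: "transpose_mat (M * Y) = M * Y"
    and y4: "transpose_mat (Y * M) = Y * M" unfolding is_mp_inverse_def by auto
  have MX: "transpose_mat X * transpose_mat M = M * X" using x3 by (simp add: transpose_mult_dim d)
  have MY: "transpose_mat Y * transpose_mat M = M * Y" using y3 by (simp add: transpose_mult_dim d)
  have XM: "transpose_mat M * transpose_mat X = X * M" using x4 by (simp add: transpose_mult_dim d)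
  have YM: "transpose_mat M * transpose_mat Y = Y * M" using y4 by (simp add: transpose_mult_dim d)
  have MYM: "transpose_mat M = transpose_mat M * (transpose_mat Y * transpose_mat M)"
    using arg_cong[OF y1, of transpose_mat] by (simp add: transpose_mult_dim d)
  have MXM: "transpose_mat M = (transpose_mat M * transpose_mat X) * transpose_mat M"
    using arg_cong[OF x1, of transpose_mat] by (simp add: transpose_mult_dim assoc_mult_mat_dim d)
  have "X = X * (transpose_mat X * transpose_mat M)" using x2 MX by (simp add: assoc_mult_mat_dim d)
  also have "\<dots> = X * (transpose_mat X * (transpose_mat M * (transpose_mat Y * transpose_mat M)))"
    using MYM by simp
  also have "\<dots> = X * ((transpose_mat X * transpose_mat M) * (transpose_mat Y * transpose_mat M))"
    by (simp add: assoc_mult_mat_dim d)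
  also have "\<dots> = (X * M * X) * M * Y" unfolding MX MY by (simp add: assoc_mult_mat_dim d)
  finally have XMY: "X = X * M * Y" unfolding x2 .
  have "Y = (transpose_mat M * transpose_mat Y) * Y" using y2 YM by simp
  also have "\<dots> = (((transpose_mat M * transpose_mat X) * transpose_mat M) * transpose_mat Y) * Y"
    using MXM by simp
  also have "\<dots> = ((transpose_mat M * transpose_mat X) * (transpose_mat M * transpose_mat Y)) * Y"
    by (simp add: assoc_mult_mat_dim d)
  also have "\<dots> = X * M * (Y * M * Y)" unfolding XM YM by (simp add: assoc_mult_mat_dim d)
  finally show ?thesis unfolding y2 XMY[symmetric] by simp
qed

text \<open>Existence: \<open>N = M\<^sup>TM\<close> is annihilated by a nonzero polynomial, since its first
  \<open>k\<^sup>2 + 1\<close> powers are linearly dependent. Powers of \<open>N\<close> can be cancelled from such a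
  polynomial identity because \<open>N\<^sup>eU = 0\<close> implies \<open>NU = 0\<close> for symmetric \<open>U\<close> commuting
  with \<open>N\<close>; this produces a polynomial \<open>Y\<close> in \<open>N\<close> with \<open>N\<^sup>2Y = N\<close>, and then \<open>(YNY)M\<^sup>T\<close>
  is the Moore--Penrose inverse of \<open>M\<close>.\<close>

definition sym_commuting :: "real mat \<Rightarrow> nat \<Rightarrow> real mat \<Rightarrow> bool" where
  "sym_commuting N k Y \<longleftrightarrow> Y \<in> carrier_mat k k \<and> transpose_mat Y = Y \<and> Y * N = N * Y"

fun horner_mat :: "(nat \<Rightarrow> real) \<Rightarrow> nat \<Rightarrow> real mat \<Rightarrow> real mat" where
  "horner_mat c 0 N = 0\<^sub>m (dim_row N) (dim_row N)"
| "horner_mat c (Suc d) N = c 0 \<cdot>\<^sub>m 1\<^sub>m (dim_row N) + N * horner_mat (\<lambda>i. c (Suc i)) d N"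

lemma horner_mat_carrier: "N \<in> carrier_mat k k \<Longrightarrow> horner_mat c d N \<in> carrier_mat k k"
  by (induction d arbitrary: c) auto

lemma horner_mat_sym_commuting:
  assumes N: "N \<in> carrier_mat k k" and sym: "transpose_mat N = N"
  shows "sym_commuting N k (horner_mat c d N)"
proof (induction d arbitrary: c)
  case (Suc d)
  let ?q = "horner_mat (\<lambda>i. c (Suc i)) d N"
  from Suc[of "\<lambda>i. c (Suc i)"]
  have q: "?q \<in> carrier_mat k k" "transpose_mat ?q = ?q" "?q * N = N * ?q"
    unfolding sym_commuting_def by auto
  have d: "dim_row N = k" "dim_col N = k" "dim_row ?q = k" "dim_col ?q = k" using N q by auto
  have "transpose_mat (horner_mat c (Suc d) N) = horner_mat c (Suc d) N"
    using q sym by (simp add: mat_algebra_dim d)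
  moreover have "horner_mat c (Suc d) N * N = N * horner_mat c (Suc d) N"
    using q by (simp add: mat_algebra_dim d)
  ultimately show ?case using N q unfolding sym_commuting_def by (simp add: d)
qed (use N in \<open>auto simp: sym_commuting_def\<close>)

lemma horner_mat_index:
  assumes N: "N \<in> carrier_mat k k" and a: "a < k" and b: "b < k"
  shows "horner_mat c d N $$ (a, b) = (\<Sum>j<d. c j * (N ^\<^sub>m j) $$ (a, b))"
  using a b
proof (induction d arbitrary: c a b)
  case (Suc d)
  let ?q = "horner_mat (\<lambda>i. c (Suc i)) d N"
  have d: "dim_row N = k" "dim_col N = k" "dim_row ?q = k" "dim_col ?q = k"
    using N horner_mat_carrier[OF N] by auto
  have Npow: "(N ^\<^sub>m Suc j) $$ (a, b) = (\<Sum>l\<in>{0..<k}. N $$ (a, l) * (N ^\<^sub>m j) $$ (l, b))" for j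
    using pow_mat_Suc_left[OF N] Suc.prems d N by (simp add: scalar_prod_def)
  have "(N * ?q) $$ (a, b) = (\<Sum>l\<in>{0..<k}. N $$ (a, l) * (\<Sum>j<d. c (Suc j) * (N ^\<^sub>m j) $$ (l, b)))"
    using Suc d by (simp add: scalar_prod_def)
  also have "\<dots> = (\<Sum>j<d. c (Suc j) * (N ^\<^sub>m Suc j) $$ (a, b))"
    unfolding Npow
    by (simp add: sum_distrib_left sum_distrib_right mult_ac sum.swap[of _ "{0..<k}"])
  finally have "(N * ?q) $$ (a, b) = (\<Sum>j<d. c (Suc j) * (N ^\<^sub>m Suc j) $$ (a, b))" .
  moreover have "horner_mat c (Suc d) N $$ (a, b) = c 0 * 1\<^sub>m k $$ (a, b) + (N * ?q) $$ (a, b)"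
    using Suc.prems d by simp
  ultimately show ?case unfolding sum.lessThan_Suc_shift using Suc.prems d by simp
qed (use N in simp)

lemma exists_annihilating_horner_mat:
  assumes N: "N \<in> carrier_mat k k"
  obtains c d where "\<exists>j<d. c j \<noteq> 0" and "horner_mat c d N = 0\<^sub>m k k"
proof -
  define K where "K = k * k"
  define D where "D = Suc K"
  define Powers :: "real mat"
    where "Powers = mat D D (\<lambda>(i, j). if i < K then (N ^\<^sub>m j) $$ (i div k, i mod k) else 0)"
  have Powers: "Powers \<in> carrier_mat D D" unfolding Powers_def by simp
  have KD: "K < D" unfolding D_def by simp
  \<comment> \<open>column \<open>j\<close> of \<open>Powers\<close> lists the entries of \<open>N\<^sup>j\<close>; the extra zero row makes it singular\<close>
  have "transpose_mat Powers *\<^sub>v unit_vec D K = 0\<^sub>v D"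
    using Powers KD by (intro eq_vecI) (auto simp: mult_unit_vec_index[of _ D D] Powers_def)
  then have "det (transpose_mat Powers) = 0"
    using det_0_iff_vec_prod_zero_field[of "transpose_mat Powers" D] Powers KD
    by (metis transpose_carrier_mat unit_vec_carrier unit_vec_nonzero)
  then have "det Powers = 0" using det_transpose[OF Powers] by simp
  then obtain v where v: "v \<in> carrier_vec D" "v \<noteq> 0\<^sub>v D" "Powers *\<^sub>v v = 0\<^sub>v D"
    using det_0_iff_vec_prod_zero_field[OF Powers] by auto
  have nz: "\<exists>j<D. v $ j \<noteq> 0"
    using v(1,2) by (metis carrier_vecD eq_vecI index_zero_vec(1,2))
  have "horner_mat (\<lambda>j. v $ j) D N = 0\<^sub>m k k"
  proof (rule eq_matI)
    fix a b assume "a < dim_row (0\<^sub>m k k :: real mat)" "b < dim_col (0\<^sub>m k k :: real mat)"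
    then have a: "a < k" and b: "b < k" by auto
    define i where "i = a * k + b"
    have "a * k + b < (a + 1) * k" using b by simp
    also have "\<dots> \<le> k * k" using a by (intro mult_right_mono) auto
    finally have iK: "i < K" unfolding i_def K_def .
    have idx: "i div k = a" "i mod k = b" unfolding i_def using b by auto
    have "0 = (Powers *\<^sub>v v) $ i" using v(3) iK KD by simp
    also have "\<dots> = (\<Sum>j\<in>{0..<D}. Powers $$ (i, j) * v $ j)"
      using Powers v(1) iK KD by (simp add: scalar_prod_def)
    also have "\<dots> = (\<Sum>j<D. v $ j * (N ^\<^sub>m j) $$ (a, b))"
      unfolding Powers_def using iK KD idx by (auto intro!: sum.cong simp: mult.commute atLeast0LessThan)
    also have "\<dots> = horner_mat (\<lambda>j. v $ j) D N $$ (a, b)" using horner_mat_index[OF N a b] by simp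
    finally show "horner_mat (\<lambda>j. v $ j) D N $$ (a, b) = 0\<^sub>m k k $$ (a, b)" using a b by simp
  qed (use horner_mat_carrier[OF N] in auto)
  with nz show ?thesis using that by blast
qed

lemma sym_pow_mult_eq_zero_imp_mult_eq_zero:
  assumes N: "N \<in> carrier_mat k k" and sym: "transpose_mat N = N" and U: "sym_commuting N k U"
  shows "N ^\<^sub>m e * U = 0\<^sub>m k k \<Longrightarrow> N * U = 0\<^sub>m k k"
proof (induction e rule: less_induct)
  case (less e)
  have Uc: "U \<in> carrier_mat k k" and Ut: "transpose_mat U = U" and UN: "U * N = N * U"
    using U unfolding sym_commuting_def by auto
  have d: "dim_row N = k" "dim_col N = k" "dim_row U = k" "dim_col U = k" using N Uc by auto
  consider "e = 0" | "e = 1" | a where "e = Suc (Suc a)"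
    by (metis One_nat_def not0_implies_Suc)
  then show ?case
  proof cases
    case 1
    with less.prems show ?thesis using N Uc by simp
  next
    case 2
    with less.prems show ?thesis using N by simp
  next
    case (3 a)
    \<comment> \<open>the symmetric \<open>V = N\<^sup>a\<^sup>+\<^sup>1U\<close> has \<open>V\<^sup>TV = N\<^sup>a(N\<^sup>eU)U = 0\<close>, which lowers the exponent\<close>
    define p where "p = Suc a"
    define V where "V = N ^\<^sub>m p * U"
    have Vc: "V \<in> carrier_mat k k" unfolding V_def using N Uc by auto
    have comm: "U * N ^\<^sub>m p = N ^\<^sub>m p * U" by (rule pow_mat_commute[OF N Uc UN])
    have Vt: "transpose_mat V = V"
      unfolding V_def by (simp add: transpose_mult_dim d transpose_pow_mat_sym[OF N sym] Ut comm)
    have pow: "N ^\<^sub>m p * N ^\<^sub>m p = N ^\<^sub>m a * N ^\<^sub>m e"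
      using pow_mat_add[OF N, of p p] pow_mat_add[OF N, of a e] 3 unfolding p_def by simp
    have "transpose_mat V * V = N ^\<^sub>m p * (U * N ^\<^sub>m p) * U"
      unfolding Vt unfolding V_def by (simp add: assoc_mult_mat_dim d)
    also have "\<dots> = (N ^\<^sub>m p * N ^\<^sub>m p) * U * U"
      unfolding comm by (simp add: assoc_mult_mat_dim d)
    also have "\<dots> = N ^\<^sub>m a * (N ^\<^sub>m e * U) * U"
      unfolding pow by (simp add: assoc_mult_mat_dim d)
    also have "\<dots> = 0\<^sub>m k k" unfolding less.prems using N Uc by (simp add: d)
    finally have "N ^\<^sub>m p * U = 0\<^sub>m k k"
      using transpose_mult_self_eq_zero[OF Vc] unfolding V_def by simp
    moreover have "p < e" unfolding p_def 3 by simp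
    ultimately show ?thesis using less.IH by blast
  qed
qed

lemma exists_sym_commuting_inner_inverse_horner:
  assumes N: "N \<in> carrier_mat k k" and sym: "transpose_mat N = N"
  shows "N ^\<^sub>m e * horner_mat c d N = 0\<^sub>m k k \<Longrightarrow> \<exists>j<d. c j \<noteq> 0 \<Longrightarrow>
    \<exists>Y. sym_commuting N k Y \<and> N * N * Y = N"
proof (induction d arbitrary: c e)
  case (Suc d)
  let ?q = "horner_mat (\<lambda>i. c (Suc i)) d N"
  have q: "sym_commuting N k ?q" by (rule horner_mat_sym_commuting[OF N sym])
  have d: "dim_row N = k" "dim_col N = k" "dim_row ?q = k" "dim_col ?q = k"
    using N q unfolding sym_commuting_def by auto
  show ?case
  proof (cases "c 0 = 0")
    case True
    have "horner_mat c (Suc d) N = N * ?q" using True by (intro eq_matI) (auto simp: d)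
    then have "N ^\<^sub>m e * (N * ?q) = 0\<^sub>m k k" using Suc.prems(1) by simp
    then have "N ^\<^sub>m Suc e * ?q = 0\<^sub>m k k" by (simp add: assoc_mult_mat_dim d)
    moreover have "\<exists>j<d. c (Suc j) \<noteq> 0" using Suc.prems(2) True by (metis less_Suc_eq_0_disj)
    ultimately show ?thesis using Suc.IH by blast
  next
    case False
    have "N * horner_mat c (Suc d) N = 0\<^sub>m k k"
      by (rule sym_pow_mult_eq_zero_imp_mult_eq_zero[OF N sym horner_mat_sym_commuting[OF N sym] Suc.prems(1)])
    then have q0: "c 0 \<cdot>\<^sub>m N + N * N * ?q = 0\<^sub>m k k" by (simp add: mat_algebra_dim d)
    define Y where "Y = (- 1 / c 0) \<cdot>\<^sub>m ?q"
    have "sym_commuting N k Y" using q unfolding sym_commuting_def Y_def by (auto simp: mat_algebra_dim d)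
    moreover have "N * N * Y = N"
    proof (rule eq_matI)
      fix i j assume ij: "i < dim_row N" "j < dim_col N"
      have "c 0 * N $$ (i, j) + (N * N * ?q) $$ (i, j) = 0"
        using arg_cong[OF q0, of "\<lambda>M. M $$ (i, j)"] ij by (simp add: d)
      moreover have "(N * N * Y) $$ (i, j) = (- 1 / c 0) * (N * N * ?q) $$ (i, j)"
        unfolding Y_def using ij by (simp add: mat_algebra_dim d)
      ultimately have "c 0 * (N * N * Y) $$ (i, j) = c 0 * N $$ (i, j)"
        using False by (simp add: field_simps)
      then show "(N * N * Y) $$ (i, j) = N $$ (i, j)" using False by simp
    qed (simp_all add: Y_def d)
    ultimately show ?thesis by blast
  qed
qed simp

lemma exists_sym_commuting_inner_inverse:
  assumes N: "N \<in> carrier_mat k k" and sym: "transpose_mat N = N"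
  obtains Y where "sym_commuting N k Y" and "N * N * Y = N"
proof -
  obtain c d where nz: "\<exists>j<d. c j \<noteq> 0" and "horner_mat c d N = 0\<^sub>m k k"
    using exists_annihilating_horner_mat[OF N] .
  then have "N ^\<^sub>m 0 * horner_mat c d N = 0\<^sub>m k k" using N by simp
  then show ?thesis using exists_sym_commuting_inner_inverse_horner[OF N sym _ nz] that by blast
qed

lemma exists_sym_commuting_mp_inverse:
  assumes N: "N \<in> carrier_mat k k" and sym: "transpose_mat N = N"
  obtains Y where "sym_commuting N k Y" and "N * Y * N = N" and "Y * N * Y = Y"
proof -
  obtain Y0 where "sym_commuting N k Y0" and NNY: "N * N * Y0 = N"
    using exists_sym_commuting_inner_inverse[OF N sym] .
  then have Y0: "Y0 \<in> carrier_mat k k" "transpose_mat Y0 = Y0" "Y0 * N = N * Y0"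
    unfolding sym_commuting_def by auto
  have d: "dim_row N = k" "dim_col N = k" "dim_row Y0 = k" "dim_col Y0 = k" using N Y0 by auto
  have NYN: "N * (Y0 * N) = N" using NNY Y0(3) by (simp add: assoc_mult_mat_dim d)
  have NYNZ: "N * (Y0 * (N * Z)) = N * Z" if "dim_row Z = k" for Z
  proof -
    have "N * (Y0 * (N * Z)) = (N * (Y0 * N)) * Z" using that by (simp add: assoc_mult_mat_dim d)
    then show ?thesis unfolding NYN .
  qed
  define Y where "Y = Y0 * N * Y0"
  have d': "dim_row Y = k" "dim_col Y = k" unfolding Y_def by (auto simp: d)
  have "Y * N = N * Y"
  proof -
    have "Y * N = Y0 * N" unfolding Y_def by (simp add: assoc_mult_mat_dim d NYN)
    moreover have "N * Y = N * Y0" unfolding Y_def by (simp add: assoc_mult_mat_dim d NYNZ)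
    ultimately show ?thesis using Y0(3) by simp
  qed
  moreover have "transpose_mat Y = Y"
    unfolding Y_def by (simp add: transpose_mult_dim d Y0(2) sym assoc_mult_mat_dim)
  moreover have "N * Y * N = N" "Y * N * Y = Y"
    unfolding Y_def by (simp_all add: assoc_mult_mat_dim d NYNZ NYN)
  ultimately show ?thesis using that d' unfolding sym_commuting_def by (auto intro: carrier_matI)
qed

lemma is_mp_inverse_exists:
  assumes M: "M \<in> carrier_mat m n"
  shows "\<exists>X. is_mp_inverse M X"
proof -
  define N where "N = transpose_mat M * M"
  have dM: "dim_row M = m" "dim_col M = n" using M by auto
  have N: "N \<in> carrier_mat n n" unfolding N_def using M by auto
  have sym: "transpose_mat N = N" unfolding N_def by (simp add: transpose_mult_dim dM)
  obtain Y where "sym_commuting N n Y" and NYN: "N * Y * N = N" and YNY: "Y * N * Y = Y"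
    using exists_sym_commuting_mp_inverse[OF N sym] .
  then have Y: "Y \<in> carrier_mat n n" and Yt: "transpose_mat Y = Y" and YN: "Y * N = N * Y"
    unfolding sym_commuting_def by auto
  have d: "dim_row Y = n" "dim_col Y = n" "dim_row N = n" "dim_col N = n" using Y N by auto
  \<comment> \<open>\<open>U = YN - I\<close> satisfies \<open>(MU)\<^sup>T(MU) = U\<^sup>TNU = 0\<close>, hence \<open>MYN = M\<close>\<close>
  define U where "U = Y * N - 1\<^sub>m n"
  have U: "U \<in> carrier_mat n n" unfolding U_def using d by auto
  have "N * U = N * Y * N - N" unfolding U_def by (simp add: mat_algebra_dim d)
  then have "N * U = 0\<^sub>m n n" unfolding NYN using N by simp
  then have "transpose_mat (M * U) * (M * U) = 0\<^sub>m n n"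
    unfolding N_def using U by (simp add: mat_algebra_dim dM)
  moreover have "M * U \<in> carrier_mat m n" using M U by auto
  ultimately have "M * U = 0\<^sub>m m n" using transpose_mult_self_eq_zero by blast
  then have "M * (Y * N) - M = 0\<^sub>m m n" unfolding U_def by (simp add: mat_algebra_dim d dM)
  moreover have "M * (Y * N) \<in> carrier_mat m n" using M d by auto
  ultimately have MYN: "M * (Y * N) = M" using eq_mat_of_minus_eq_zero M by blast
  define X where "X = Y * transpose_mat M"
  have "X \<in> carrier_mat (dim_col M) (dim_row M)" unfolding X_def by (auto simp: d dM)
  moreover have "M * X * M = M" unfolding X_def using MYN unfolding N_def
    by (simp add: assoc_mult_mat_dim d dM)
  moreover have "X * M * X = X"
    using arg_cong[OF YNY, of "\<lambda>Z. Z * transpose_mat M"] unfolding X_def N_def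
    by (simp add: assoc_mult_mat_dim d dM)
  moreover have "transpose_mat (M * X) = M * X"
    unfolding X_def by (simp add: transpose_mult_dim assoc_mult_mat_dim d dM Yt)
  moreover have "transpose_mat (X * M) = X * M"
    unfolding X_def using YN unfolding N_def by (simp add: transpose_mult_dim assoc_mult_mat_dim d dM Yt)
  ultimately show ?thesis unfolding is_mp_inverse_def by blast
qed

lemma is_mp_inverse_mp_inverse:
  assumes "M \<in> carrier_mat m n"
  shows "is_mp_inverse M (mp_inverse M)"
proof -
  obtain X where X: "is_mp_inverse M X" using is_mp_inverse_exists[OF assms] by blast
  then have "(THE X. is_mp_inverse M X) = X" using is_mp_inverse_unique by blast
  with X show ?thesis unfolding mp_inverse_def is_mp_inverse_def[symmetric] by simp
qed

lemma mp_inverse_carrier: "M \<in> carrier_mat m n \<Longrightarrow> mp_inverse M \<in> carrier_mat n m"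
  using is_mp_inverse_carrier is_mp_inverse_mp_inverse by blast

lemma mp_inverse_identities:
  assumes "M \<in> carrier_mat m n"
  shows "M * mp_inverse M * M = M" "mp_inverse M * M * mp_inverse M = mp_inverse M"
    "transpose_mat (M * mp_inverse M) = M * mp_inverse M"
    "transpose_mat (mp_inverse M * M) = mp_inverse M * M"
  using is_mp_inverse_mp_inverse[OF assms] unfolding is_mp_inverse_def by auto

text \<open>\<open>P\<^sup>\<dagger>P\<close> and \<open>MM\<^sup>\<dagger>\<close> are the orthogonal projections onto \<open>N(P)\<^sup>\<bottom>\<close> and \<open>R(M)\<close>.\<close>

lemma mult_mp_inverse_mult_of_null_subset:
  assumes P: "P \<in> carrier_mat r c" and B: "B \<in> carrier_mat r' c" and sub: "null_mat P \<subseteq> null_mat B"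
  shows "B * (mp_inverse P * P) = B"
proof (rule eq_matI_mult_vec)
  define X where "X = mp_inverse P"
  have X: "X \<in> carrier_mat c r" unfolding X_def using mp_inverse_carrier[OF P] .
  show "B * (X * P) \<in> carrier_mat r' c" using B X P by auto
  fix x :: "real vec" assume x: "x \<in> carrier_vec c"
  have "P *\<^sub>v (X *\<^sub>v (P *\<^sub>v x)) = P *\<^sub>v x"
    using mp_inverse_identities(1)[OF P] P X x unfolding X_def[symmetric]
    by (metis assoc_mult_mat_vec mult_carrier_mat mult_mat_vec_carrier)
  then have "x - X *\<^sub>v (P *\<^sub>v x) \<in> null_mat P"
    using P X x unfolding null_mat_def by (auto simp: mult_minus_distrib_mat_vec[of _ r c])
  then have "B *\<^sub>v (x - X *\<^sub>v (P *\<^sub>v x)) = 0\<^sub>v r'" using sub B unfolding null_mat_def by auto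
  moreover have "B *\<^sub>v (x - X *\<^sub>v (P *\<^sub>v x)) = B *\<^sub>v x - B *\<^sub>v (X *\<^sub>v (P *\<^sub>v x))"
    using B X P x by (subst mult_minus_distrib_mat_vec[of _ r' c]) auto
  ultimately have "B *\<^sub>v x = B *\<^sub>v (X *\<^sub>v (P *\<^sub>v x))"
    using eq_vec_of_minus_eq_zero[of "B *\<^sub>v x" r' "B *\<^sub>v (X *\<^sub>v (P *\<^sub>v x))"] B X P x by auto
  then show "B * (X * P) *\<^sub>v x = B *\<^sub>v x" using B X P x by (simp add: assoc_mult_mat_vec_dim)
qed (use B in auto)

lemma mult_mp_inverse_mult_of_range_subset:
  assumes M: "M \<in> carrier_mat r c" and B: "B \<in> carrier_mat r c'" and sub: "range_mat B \<subseteq> range_mat M"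
  shows "M * mp_inverse M * B = B"
proof (rule eq_matI_mult_vec)
  define Z where "Z = mp_inverse M"
  have Z: "Z \<in> carrier_mat c r" unfolding Z_def using mp_inverse_carrier[OF M] .
  show "M * Z * B \<in> carrier_mat r c'" using B Z M by auto
  fix x :: "real vec" assume x: "x \<in> carrier_vec c'"
  have "B *\<^sub>v x \<in> range_mat M" using x B sub unfolding range_mat_def by auto
  then obtain y where y: "y \<in> carrier_vec c" "B *\<^sub>v x = M *\<^sub>v y" unfolding range_mat_def using M by auto
  have "M * Z * B *\<^sub>v x = (M * Z * M) *\<^sub>v y" using B Z M x y by (simp add: assoc_mult_mat_vec_dim)
  then show "M * Z * B *\<^sub>v x = B *\<^sub>v x"
    unfolding Z_def mp_inverse_identities(1)[OF M] y(2) .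
qed (use B in auto)

lemma mp_inverse_mult_absorb_of_null_subset:
  assumes P: "P \<in> carrier_mat r c" and B: "B \<in> carrier_mat r' c" and sub: "null_mat P \<subseteq> null_mat B"
  shows "mp_inverse P * P * mp_inverse B = mp_inverse B"
proof -
  define X Z where "X = mp_inverse P" and "Z = mp_inverse B"
  have d: "dim_row X = c" "dim_col X = r" "dim_row Z = c" "dim_col Z = r'"
    "dim_row P = r" "dim_col P = c" "dim_row B = r'" "dim_col B = c"
    using P B mp_inverse_carrier[OF P] mp_inverse_carrier[OF B] unfolding X_def Z_def by auto
  note P_id = mp_inverse_identities[OF P, folded X_def] and B_id = mp_inverse_identities[OF B, folded Z_def]
  have Z: "Z = transpose_mat B * (transpose_mat Z * Z)"
    using B_id(2) arg_cong[OF B_id(4), of "\<lambda>T. T * Z"] by (simp add: transpose_mult_dim assoc_mult_mat_dim d)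
  have XPB: "X * P * transpose_mat B = transpose_mat B"
    using arg_cong[OF mult_mp_inverse_mult_of_null_subset[OF P B sub], of transpose_mat] P_id(4)
    by (simp add: transpose_mult_dim d flip: X_def)
  have "X * P * Z = (X * P * transpose_mat B) * (transpose_mat Z * Z)"
    by (subst Z) (simp add: assoc_mult_mat_dim d)
  also have "\<dots> = Z" unfolding XPB using Z by simp
  finally show ?thesis unfolding X_def Z_def .
qed

lemma mp_inverse_mult_absorb_of_range_subset:
  assumes P: "P \<in> carrier_mat r c" and B: "B \<in> carrier_mat r c'" and sub: "range_mat P \<subseteq> range_mat B"
  shows "mp_inverse P * (B * mp_inverse B) = mp_inverse P"
proof -
  define X Z where "X = mp_inverse P" and "Z = mp_inverse B"
  have d: "dim_row X = c" "dim_col X = r" "dim_row Z = c'" "dim_col Z = r"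
    "dim_row P = r" "dim_col P = c" "dim_row B = r" "dim_col B = c'"
    using P B mp_inverse_carrier[OF P] mp_inverse_carrier[OF B] unfolding X_def Z_def by auto
  note P_id = mp_inverse_identities[OF P, folded X_def] and B_id = mp_inverse_identities[OF B, folded Z_def]
  have X: "X = X * (transpose_mat X * transpose_mat P)"
    using P_id(2) arg_cong[OF P_id(3), of "\<lambda>T. X * T"] by (simp add: transpose_mult_dim assoc_mult_mat_dim d)
  have PBZ: "transpose_mat P * (B * Z) = transpose_mat P"
    using arg_cong[OF mult_mp_inverse_mult_of_range_subset[OF B P sub], of transpose_mat] B_id(3)
    by (simp add: transpose_mult_dim d flip: Z_def)
  have "X * (B * Z) = X * (transpose_mat X * (transpose_mat P * (B * Z)))"
    by (subst X) (simp add: assoc_mult_mat_dim d)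
  also have "\<dots> = X" unfolding PBZ using X by simp
  finally show ?thesis unfolding X_def Z_def .
qed

lemma one_minus_mp_inverse_diff_mult_mp_inverse:
  assumes P: "P \<in> carrier_mat m n" and B: "B \<in> carrier_mat m n"
    and null: "null_mat P \<subseteq> null_mat B" and range: "range_mat P \<subseteq> range_mat B"
  shows "(1\<^sub>m n - mp_inverse P * (P - B)) * mp_inverse B = mp_inverse P"
proof -
  define X Z where "X = mp_inverse P" and "Z = mp_inverse B"
  have X: "X \<in> carrier_mat n m" and Z: "Z \<in> carrier_mat n m"
    unfolding X_def Z_def using mp_inverse_carrier P B by auto
  have "(1\<^sub>m n - X * (P - B)) * Z = Z - (X * (P * Z) - X * (B * Z))"
    using X Z P B by (simp add: mat_algebra_dim)
  also have "X * (P * Z) = Z"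
    using mp_inverse_mult_absorb_of_null_subset[OF P B null] X P Z
    by (simp add: assoc_mult_mat_dim flip: X_def Z_def)
  also have "X * (B * Z) = X"
    using mp_inverse_mult_absorb_of_range_subset[OF P B range] by (simp flip: X_def Z_def)
  also have "Z - (Z - X) = X" using X Z by (intro eq_matI) auto
  finally show ?thesis unfolding X_def Z_def .
qed

section \<open>Range and null space of \<open>EA\<close> for an injective \<open>E\<close>\<close>

lemma inj_square_mat_right_inverse:
  assumes F: "(F :: real mat) \<in> carrier_mat k k"
    and inj: "\<And>x. x \<in> carrier_vec k \<Longrightarrow> F *\<^sub>v x = 0\<^sub>v k \<Longrightarrow> x = 0\<^sub>v k"
  obtains B where "B \<in> carrier_mat k k" and "F * B = 1\<^sub>m k"
proof -
  have "det F \<noteq> 0" using det_0_iff_vec_prod_zero_field[OF F] inj by auto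
  from det_non_zero_imp_unit[OF F this] show ?thesis
    using that unfolding Units_def by (auto simp: ring_mat_simps)
qed

lemma null_mat_mult_left_inj:
  assumes A: "A \<in> carrier_mat m n" and E: "E \<in> carrier_mat m m"
    and inj: "\<And>x. x \<in> carrier_vec m \<Longrightarrow> E *\<^sub>v x = 0\<^sub>v m \<Longrightarrow> x = 0\<^sub>v m"
  shows "null_mat (E * A) = null_mat A"
proof -
  have "E * A *\<^sub>v x = 0\<^sub>v m \<longleftrightarrow> A *\<^sub>v x = 0\<^sub>v m" if "x \<in> carrier_vec n" for x
    using inj[of "A *\<^sub>v x"] A E that by auto
  then show ?thesis unfolding null_mat_def using A E by auto
qed

lemma mult_mp_inverse_mult_vec_of_range:
  assumes A: "A \<in> carrier_mat m n" and y: "y \<in> range_mat A"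
  shows "A * mp_inverse A *\<^sub>v y = y"
proof -
  from y obtain x where "x \<in> carrier_vec n" "y = A *\<^sub>v x" unfolding range_mat_def using A by auto
  then show ?thesis using A mp_inverse_carrier[OF A] mp_inverse_identities(1)[OF A]
    by (metis assoc_mult_mat_vec mult_carrier_mat)
qed

lemma mult_mp_inverse_mult_vec_in_range:
  assumes A: "A \<in> carrier_mat m n" and z: "z \<in> carrier_vec m"
  shows "A * mp_inverse A *\<^sub>v z \<in> range_mat A"
proof -
  have "A * mp_inverse A *\<^sub>v z = A *\<^sub>v (mp_inverse A *\<^sub>v z)" using A mp_inverse_carrier[OF A] z by auto
  then show ?thesis unfolding range_mat_def using A mp_inverse_carrier[OF A] z by auto
qed

text \<open>With the orthogonal projection \<open>\<Pi> = AA\<^sup>\<dagger>\<close> onto \<open>R(A)\<close>, the matrix \<open>F = E\<Pi> + (I - \<Pi>)\<close>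
  is injective, and every \<open>y = Fx \<in> R(A)\<close> equals \<open>\<Pi>Fx = E\<Pi>x \<in> R(EA)\<close>.\<close>

lemma range_mat_subset_mult_left_inj:
  assumes A: "A \<in> carrier_mat m n" and E: "E \<in> carrier_mat m m"
    and inj: "\<And>x. x \<in> carrier_vec m \<Longrightarrow> E *\<^sub>v x = 0\<^sub>v m \<Longrightarrow> x = 0\<^sub>v m"
    and pres: "\<And>y. y \<in> range_mat A \<Longrightarrow> E *\<^sub>v y \<in> range_mat A"
  shows "range_mat A \<subseteq> range_mat (E * A)"
proof
  define Pi where "Pi = A * mp_inverse A"
  have Pi: "Pi \<in> carrier_mat m m" unfolding Pi_def using A mp_inverse_carrier[OF A] by auto
  note Pi_fix = mult_mp_inverse_mult_vec_of_range[OF A, folded Pi_def]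
    and Pi_range = mult_mp_inverse_mult_vec_in_range[OF A, folded Pi_def]
  define F where "F = E * Pi + (1\<^sub>m m - Pi)"
  have F: "F \<in> carrier_mat m m" unfolding F_def using E Pi by auto
  have Fx: "F *\<^sub>v x = E *\<^sub>v (Pi *\<^sub>v x) + (x - Pi *\<^sub>v x)" if x: "x \<in> carrier_vec m" for x
  proof -
    have "F *\<^sub>v x = (E * Pi) *\<^sub>v x + (1\<^sub>m m - Pi) *\<^sub>v x"
      unfolding F_def using E Pi x by (intro add_mult_distrib_mat_vec) auto
    also have "(1\<^sub>m m - Pi) *\<^sub>v x = 1\<^sub>m m *\<^sub>v x - Pi *\<^sub>v x"
      by (rule minus_mult_distrib_mat_vec[OF one_carrier_mat Pi x])
    also have "(E * Pi) *\<^sub>v x = E *\<^sub>v (Pi *\<^sub>v x)" using E Pi x by (simp add: assoc_mult_mat_vec_dim)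
    finally show ?thesis using x by simp
  qed
  have Pi_F: "Pi *\<^sub>v (F *\<^sub>v x) = E *\<^sub>v (Pi *\<^sub>v x)" if x: "x \<in> carrier_vec m" for x
  proof -
    define u where "u = Pi *\<^sub>v x"
    have u: "u \<in> carrier_vec m" "u \<in> range_mat A" unfolding u_def using Pi x Pi_range by auto
    then have Eu: "E *\<^sub>v u \<in> carrier_vec m" "E *\<^sub>v u \<in> range_mat A" using E pres by auto
    have "Pi *\<^sub>v (F *\<^sub>v x) = Pi *\<^sub>v (E *\<^sub>v u) + (u - Pi *\<^sub>v u)"
      unfolding Fx[OF x] u_def[symmetric] using Pi Eu x u
      by (simp add: mult_add_distrib_mat_vec[of _ m m] mult_minus_distrib_mat_vec[of _ m m] u_def[symmetric])
    also have "\<dots> = E *\<^sub>v u" unfolding Pi_fix[OF Eu(2)] Pi_fix[OF u(2)] using Eu u by simp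
    finally show ?thesis unfolding u_def .
  qed
  have F_inj: "x = 0\<^sub>v m" if x: "x \<in> carrier_vec m" and Fx0: "F *\<^sub>v x = 0\<^sub>v m" for x
  proof -
    have zero: "Pi *\<^sub>v 0\<^sub>v m = 0\<^sub>v m" "E *\<^sub>v 0\<^sub>v m = 0\<^sub>v m"
      using Pi E by (auto intro!: eq_vecI simp: scalar_prod_def)
    have "E *\<^sub>v (Pi *\<^sub>v x) = 0\<^sub>v m" using Pi_F[OF x] Fx0 zero(1) by simp
    then have "Pi *\<^sub>v x = 0\<^sub>v m" using inj Pi x by auto
    then have "F *\<^sub>v x = x" unfolding Fx[OF x] using x zero(2) by simp
    then show ?thesis using Fx0 by simp
  qed
  obtain B where B: "B \<in> carrier_mat m m" "F * B = 1\<^sub>m m"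
    using inj_square_mat_right_inverse[OF F F_inj] .
  fix y assume y: "y \<in> range_mat A"
  then have y_carrier: "y \<in> carrier_vec m" using A unfolding range_mat_def by auto
  define x where "x = B *\<^sub>v y"
  have x: "x \<in> carrier_vec m" unfolding x_def using B y_carrier by auto
  have "F *\<^sub>v x = y" unfolding x_def using F B y_carrier by (metis assoc_mult_mat_vec one_mult_mat_vec)
  then have "y = E *\<^sub>v (Pi *\<^sub>v x)" using Pi_F[OF x] Pi_fix[OF y] by simp
  moreover obtain x1 where x1: "x1 \<in> carrier_vec n" "Pi *\<^sub>v x = A *\<^sub>v x1"
    using Pi_range[OF x] A unfolding range_mat_def by auto
  ultimately have "y = E * A *\<^sub>v x1" using E A by simp
  then show "y \<in> range_mat (E * A)" unfolding range_mat_def using x1(1) A by auto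
qed

lemma range_mat_mult_left_inj:
  assumes A: "A \<in> carrier_mat m n" and E: "E \<in> carrier_mat m m"
    and inj: "\<And>x. x \<in> carrier_vec m \<Longrightarrow> E *\<^sub>v x = 0\<^sub>v m \<Longrightarrow> x = 0\<^sub>v m"
    and pres: "\<And>y. y \<in> range_mat A \<Longrightarrow> E *\<^sub>v y \<in> range_mat A"
  shows "range_mat (E * A) = range_mat A"
proof
  show "range_mat (E * A) \<subseteq> range_mat A"
  proof
    fix y assume "y \<in> range_mat (E * A)"
    then obtain x where x: "x \<in> carrier_vec n" "y = E * A *\<^sub>v x" unfolding range_mat_def using A by auto
    then have "y = E *\<^sub>v (A *\<^sub>v x)" using A E by auto
    moreover have "A *\<^sub>v x \<in> range_mat A" unfolding range_mat_def using x A by auto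
    ultimately show "y \<in> range_mat A" using pres by simp
  qed
qed (rule range_mat_subset_mult_left_inj[OF A E inj pres])

lemma one_plus_mult_vec_inj:
  fixes M :: "real mat"
  assumes M: "M \<in> carrier_mat m m" and spec: "-1 \<notin> real_spectrum M"
    and x: "x \<in> carrier_vec m" and Mx: "(1\<^sub>m m + M) *\<^sub>v x = 0\<^sub>v m"
  shows "x = 0\<^sub>v m"
proof (rule ccontr)
  assume "x \<noteq> 0\<^sub>v m"
  moreover have "M *\<^sub>v x = (-1) \<cdot>\<^sub>v x"
  proof (rule eq_vecI)
    fix i assume "i < dim_vec ((-1) \<cdot>\<^sub>v x)"
    then have i: "i < m" using x by simp
    have "((1\<^sub>m m + M) *\<^sub>v x) $ i = 0" using Mx i by simp
    then have "x $ i + (M *\<^sub>v x) $ i = 0"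
      using i M x by (simp add: add_mult_distrib_mat_vec[of _ m m])
    then show "(M *\<^sub>v x) $ i = ((-1) \<cdot>\<^sub>v x) $ i" using i x by simp
  qed (use M x in simp)
  ultimately have "eigenvalue M (-1)" unfolding eigenvalue_def eigenvector_def using M x by auto
  then have "eigenvalue (map_mat complex_of_real M) (-1)"
    using of_real_hom.eigenvalue_hom[OF M, of "-1"] by simp
  then show False using spec unfolding real_spectrum_def spectrum_def by simp
qed

lemma one_plus_mult_preserves_range:
  assumes A: "A \<in> carrier_mat m n" and R: "R \<in> carrier_mat m n" and X: "X \<in> carrier_mat n m"
    and range: "range_mat R \<subseteq> range_mat A" and y: "y \<in> range_mat A"
  shows "(1\<^sub>m m + R * X) *\<^sub>v y \<in> range_mat A"
proof -
  obtain x0 where x0: "x0 \<in> carrier_vec n" "y = A *\<^sub>v x0" using y A unfolding range_mat_def by auto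
  have "X *\<^sub>v y \<in> carrier_vec n" using X x0 A by auto
  then have "R *\<^sub>v (X *\<^sub>v y) \<in> range_mat R" unfolding range_mat_def using R by auto
  then have "R *\<^sub>v (X *\<^sub>v y) \<in> range_mat A" using range by auto
  then obtain x1 where x1: "x1 \<in> carrier_vec n" "R *\<^sub>v (X *\<^sub>v y) = A *\<^sub>v x1"
    using A unfolding range_mat_def by auto
  have "(1\<^sub>m m + R * X) *\<^sub>v y = y + R *\<^sub>v (X *\<^sub>v y)"
    using R X x0 A by (simp add: add_mult_distrib_mat_vec[of _ m m])
  also have "\<dots> = A *\<^sub>v (x0 + x1)" unfolding x1(2) x0(2) using A x0 x1
    by (simp add: mult_add_distrib_mat_vec[of _ m n])
  finally show ?thesis unfolding range_mat_def using A x0 x1 by auto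
qed

section \<open>Entrywise nonnegative matrices\<close>

lemma nonneg_mat_mult_vec_mono:
  assumes M: "nonneg_mat M" "M \<in> carrier_mat r c" and ab: "a \<in> carrier_vec c" "b \<in> carrier_vec c"
    "\<And>i. i < c \<Longrightarrow> a $ i \<le> b $ i" and i: "i < r"
  shows "(M *\<^sub>v a) $ i \<le> (M *\<^sub>v b) $ i"
proof -
  have "(\<Sum>l\<in>{0..<c}. M $$ (i, l) * a $ l) \<le> (\<Sum>l\<in>{0..<c}. M $$ (i, l) * b $ l)"
    using M ab i unfolding nonneg_mat_def by (intro sum_mono mult_left_mono) auto
  then show ?thesis using M ab i by (simp add: scalar_prod_def)
qed

lemma nonneg_mat_mult_vec_nonneg:
  assumes M: "nonneg_mat M" "M \<in> carrier_mat r c" and a: "a \<in> carrier_vec c"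
    "\<And>i. i < c \<Longrightarrow> 0 \<le> a $ i" and i: "i < r"
  shows "0 \<le> (M *\<^sub>v a) $ i"
  using M a i unfolding nonneg_mat_def by (auto simp: scalar_prod_def intro!: sum_nonneg)

lemma nonneg_mat_transpose: "nonneg_mat M \<Longrightarrow> nonneg_mat (transpose_mat M)"
  unfolding nonneg_mat_def by auto

lemma nonneg_mat_mult:
  "nonneg_mat A \<Longrightarrow> nonneg_mat B \<Longrightarrow> dim_col A = dim_row B \<Longrightarrow> nonneg_mat (A * B)"
  unfolding nonneg_mat_def by (auto simp: scalar_prod_def intro!: sum_nonneg)

lemma nonpos_mat_mult:
  "nonneg_mat A \<Longrightarrow> nonpos_mat B \<Longrightarrow> dim_col A = dim_row B \<Longrightarrow> nonpos_mat (A * B)"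
  unfolding nonneg_mat_def nonpos_mat_def by (auto simp: scalar_prod_def intro!: sum_nonpos mult_nonneg_nonpos)

lemma nonneg_mat_minus:
  "nonneg_mat A \<Longrightarrow> nonpos_mat B \<Longrightarrow> dim_row A = dim_row B \<Longrightarrow> dim_col A = dim_col B \<Longrightarrow>
   nonneg_mat (A - B)"
  unfolding nonneg_mat_def nonpos_mat_def by fastforce

lemma nonneg_mat_uminus: "nonpos_mat A \<Longrightarrow> nonneg_mat (- A)"
  unfolding nonneg_mat_def nonpos_mat_def by auto

lemma nonneg_mat_add:
  "nonneg_mat A \<Longrightarrow> nonneg_mat B \<Longrightarrow> dim_row A = dim_row B \<Longrightarrow> dim_col A = dim_col B \<Longrightarrow>
   nonneg_mat (A + B)"
  unfolding nonneg_mat_def by fastforce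

section \<open>A spectral radius bound for the block companion matrix\<close>

lemma nonneg_seq_const_decrease_eq_zero:
  fixes f :: "nat \<Rightarrow> real"
  assumes c: "0 \<le> c" and dec: "\<And>k. c \<le> f k - f (Suc k)" and f: "\<And>k. 0 \<le> f k"
  shows "c = 0"
proof (rule ccontr)
  assume "c \<noteq> 0"
  with c have "0 < c" by simp
  then obtain N where N: "f 0 < real N * c" using ex_less_of_nat_mult by blast
  have "real N * c = (\<Sum>k<N. c)" by simp
  also have "\<dots> \<le> (\<Sum>k<N. f k - f (Suc k))" by (rule sum_mono) (rule dec)
  also have "\<dots> = f 0 - f N" by (rule sum_lessThan_telescope')
  finally show False using N f[of N] by simp
qed

lemma nonneg_mat_subinvariant_vec_le_pow:
  assumes H: "H \<in> carrier_mat n n" "nonneg_mat H" and w: "w \<in> carrier_vec n"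
    and sub: "\<And>i. i < n \<Longrightarrow> w $ i \<le> (H *\<^sub>v w) $ i" and i: "i < n"
  shows "w $ i \<le> (H ^\<^sub>m k *\<^sub>v w) $ i"
  using i
proof (induction k arbitrary: i)
  case 0 then show ?case using w H(1) by simp
next
  case (Suc k)
  have Hk: "H ^\<^sub>m k *\<^sub>v w \<in> carrier_vec n" using H(1) by (intro carrier_vecI) auto
  have "w $ i \<le> (H *\<^sub>v w) $ i" using sub[OF Suc.prems] .
  also have "\<dots> \<le> (H *\<^sub>v (H ^\<^sub>m k *\<^sub>v w)) $ i"
    using nonneg_mat_mult_vec_mono[OF H(2,1) w Hk] Suc by auto
  also have "\<dots> = (H ^\<^sub>m Suc k *\<^sub>v w) $ i"
    unfolding pow_mat_Suc_left[OF H(1)] using H(1) w by (simp add: assoc_mult_mat_vec_dim)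
  finally show ?case .
qed

text \<open>As \<open>w \<le> (G\<^sup>T)\<^sup>kw\<close> and \<open>X\<^sup>T = Z\<^sup>T(I - G\<^sup>T)\<close>, the nonnegative numbers \<open>(Z\<^sup>T(G\<^sup>T)\<^sup>kw)\<^sub>j\<close>
  decrease in each step by at least \<open>(X\<^sup>Tw)\<^sub>j \<ge> 0\<close>.\<close>

lemma subinvariant_vec_transpose_mult_eq_zero:
  fixes G X Z :: "real mat" and w :: "real vec"
  assumes G: "G \<in> carrier_mat n n" and X: "X \<in> carrier_mat n m" and Z: "Z \<in> carrier_mat n m"
    and nonneg: "nonneg_mat G" "nonneg_mat X" "nonneg_mat Z"
    and GZ: "(1\<^sub>m n - G) * Z = X"
    and w: "w \<in> carrier_vec n" and w_nonneg: "\<And>i. i < n \<Longrightarrow> 0 \<le> w $ i"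
    and sub: "\<And>i. i < n \<Longrightarrow> w $ i \<le> (transpose_mat G *\<^sub>v w) $ i"
  shows "transpose_mat X *\<^sub>v w = 0\<^sub>v m"
proof -
  define H where "H = transpose_mat G"
  have H: "H \<in> carrier_mat n n" "nonneg_mat H" unfolding H_def using G nonneg_mat_transpose nonneg by auto
  have XT: "transpose_mat X \<in> carrier_mat m n" "nonneg_mat (transpose_mat X)"
    and ZT: "transpose_mat Z \<in> carrier_mat m n" "nonneg_mat (transpose_mat Z)"
    using X Z nonneg_mat_transpose nonneg by auto
  define u where "u k = (H ^\<^sub>m k) *\<^sub>v w" for k
  have u: "u k \<in> carrier_vec n" for k unfolding u_def using H(1) by (intro carrier_vecI) auto
  have u_Suc: "u (Suc k) = H *\<^sub>v u k" for k
    unfolding u_def pow_mat_Suc_left[OF H(1)] using H w by (simp add: assoc_mult_mat_vec_dim)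
  have u_ge: "\<forall>i<n. w $ i \<le> u k $ i" for k
    using nonneg_mat_subinvariant_vec_le_pow[OF H w, of _ k] sub unfolding u_def H_def by blast
  have XT_eq: "transpose_mat X = transpose_mat Z - transpose_mat Z * H"
  proof -
    have "transpose_mat X = transpose_mat Z * (1\<^sub>m n - H)"
      unfolding GZ[symmetric] H_def using G Z by (simp add: transpose_mult_dim transpose_minus_dim)
    also have "\<dots> = transpose_mat Z - transpose_mat Z * H" using Z H by (simp add: mult_minus_distrib_dim)
    finally show ?thesis .
  qed
  have XT_u: "(transpose_mat X *\<^sub>v u k) $ j = (transpose_mat Z *\<^sub>v u k) $ j - (transpose_mat Z *\<^sub>v u (Suc k)) $ j"
    if j: "j < m" for j k
    unfolding XT_eq u_Suc using Z H u[of k] j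
    by (simp add: minus_mult_distrib_mat_vec[of _ m n] assoc_mult_mat_vec_dim)
  have "(transpose_mat X *\<^sub>v w) $ j = 0" if j: "j < m" for j
  proof (rule nonneg_seq_const_decrease_eq_zero)
    show "0 \<le> (transpose_mat X *\<^sub>v w) $ j" using nonneg_mat_mult_vec_nonneg[OF XT(2,1) w w_nonneg j] .
    show "(transpose_mat X *\<^sub>v w) $ j \<le> (transpose_mat Z *\<^sub>v u k) $ j - (transpose_mat Z *\<^sub>v u (Suc k)) $ j" for k
      unfolding XT_u[OF j, symmetric] using nonneg_mat_mult_vec_mono[OF XT(2,1) w u[of k]] u_ge[of k] j by auto
    show "0 \<le> (transpose_mat Z *\<^sub>v u k) $ j" for k
      using nonneg_mat_mult_vec_nonneg[OF ZT(2,1) u[of k]] u_ge[of k] w_nonneg j by force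
  qed
  then show ?thesis using XT by (intro eq_vecI) auto
qed

lemma subinvariant_nonneg_vec_eq_zero:
  fixes G X Z Q :: "real mat" and w :: "real vec"
  assumes G: "G \<in> carrier_mat n n" and X: "X \<in> carrier_mat n m" and Z: "Z \<in> carrier_mat n m"
    and Q: "Q \<in> carrier_mat m n"
    and nonneg: "nonneg_mat G" "nonneg_mat X" "nonneg_mat Z"
    and GZ: "(1\<^sub>m n - G) * Z = X" and GQ: "G = X * Q"
    and w: "w \<in> carrier_vec n" and w_nonneg: "\<And>i. i < n \<Longrightarrow> 0 \<le> w $ i"
    and sub: "\<And>i. i < n \<Longrightarrow> w $ i \<le> (transpose_mat G *\<^sub>v w) $ i"
  shows "w = 0\<^sub>v n"
proof -
  have "transpose_mat G *\<^sub>v w = transpose_mat Q *\<^sub>v (transpose_mat X *\<^sub>v w)"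
    unfolding GQ using X Q w by (simp add: transpose_mult_dim assoc_mult_mat_vec_dim)
  also have "transpose_mat X *\<^sub>v w = 0\<^sub>v m"
    by (rule subinvariant_vec_transpose_mult_eq_zero[OF G X Z nonneg GZ w w_nonneg sub])
  also have "transpose_mat Q *\<^sub>v 0\<^sub>v m = 0\<^sub>v n" using Q by auto
  finally show ?thesis using sub w_nonneg w by (intro eq_vecI) (auto intro: order.antisym)
qed

lemma sum_lessThan_add_split: "(\<Sum>j<a + b. f j) = (\<Sum>j<a. f j) + (\<Sum>j<b. f (a + j :: nat))"
  by (induction b) (auto simp: add.assoc)

lemma block_companion_transpose_mult_vec:
  fixes K L :: "real mat" and v :: "complex vec"
  assumes K: "K \<in> carrier_mat n n" and L: "L \<in> carrier_mat n n" and v: "v \<in> carrier_vec (n + n)"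
    and i: "i < n"
  defines "W \<equiv> map_mat complex_of_real (four_block_mat K L (1\<^sub>m n) (0\<^sub>m n n))"
  shows "(transpose_mat W *\<^sub>v v) $ i = (\<Sum>j<n. of_real (K $$ (j, i)) * v $ j) + v $ (n + i)"
    and "(transpose_mat W *\<^sub>v v) $ (n + i) = (\<Sum>j<n. of_real (L $$ (j, i)) * v $ j)"
proof -
  have d: "dim_row K = n" "dim_col K = n" "dim_row L = n" "dim_col L = n" using K L by auto
  have entry: "(transpose_mat W *\<^sub>v v) $ p
     = (\<Sum>j<n. W $$ (j, p) * v $ j) + (\<Sum>j<n. W $$ (n + j, p) * v $ (n + j))" if p: "p < n + n" for p
  proof -
    have "(transpose_mat W *\<^sub>v v) $ p = (\<Sum>j\<in>{0..<n + n}. W $$ (j, p) * v $ j)"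
      unfolding W_def using K L v p by (simp add: scalar_prod_def)
    also have "\<dots> = (\<Sum>j<n. W $$ (j, p) * v $ j) + (\<Sum>j<n. W $$ (n + j, p) * v $ (n + j))"
      unfolding atLeast0LessThan by (rule sum_lessThan_add_split)
    finally show ?thesis .
  qed
  have "(transpose_mat W *\<^sub>v v) $ i = (\<Sum>j<n. W $$ (j, i) * v $ j) + (\<Sum>j<n. W $$ (n + j, i) * v $ (n + j))"
    using entry i by simp
  also have "(\<Sum>j<n. W $$ (j, i) * v $ j) = (\<Sum>j<n. of_real (K $$ (j, i)) * v $ j)"
    unfolding W_def using i by (intro sum.cong) (auto simp: d)
  also have "(\<Sum>j<n. W $$ (n + j, i) * v $ (n + j)) = (\<Sum>j<n. if j = i then v $ (n + i) else 0)"
    unfolding W_def using i by (intro sum.cong) (auto simp: d)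
  finally show "(transpose_mat W *\<^sub>v v) $ i = (\<Sum>j<n. of_real (K $$ (j, i)) * v $ j) + v $ (n + i)"
    using i by simp
  have "(transpose_mat W *\<^sub>v v) $ (n + i)
      = (\<Sum>j<n. W $$ (j, n + i) * v $ j) + (\<Sum>j<n. W $$ (n + j, n + i) * v $ (n + j))"
    using entry i by simp
  also have "(\<Sum>j<n. W $$ (j, n + i) * v $ j) = (\<Sum>j<n. of_real (L $$ (j, i)) * v $ j)"
    unfolding W_def using i by (intro sum.cong) (auto simp: d)
  also have "(\<Sum>j<n. W $$ (n + j, n + i) * v $ (n + j)) = 0"
    unfolding W_def using i by (intro sum.neutral) (auto simp: d)
  finally show "(transpose_mat W *\<^sub>v v) $ (n + i) = (\<Sum>j<n. of_real (L $$ (j, i)) * v $ j)"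
    by simp
qed

lemma norm_nonneg_mat_col_sum:
  assumes M: "nonneg_mat M" "M \<in> carrier_mat n n" and i: "i < n"
  shows "cmod (\<Sum>j<n. of_real (M $$ (j, i)) * v $ j) \<le> (\<Sum>j<n. M $$ (j, i) * cmod (v $ j))"
proof -
  have "cmod (\<Sum>j<n. of_real (M $$ (j, i)) * v $ j) \<le> (\<Sum>j<n. cmod (of_real (M $$ (j, i)) * v $ j))"
    by (rule norm_sum)
  also have "\<dots> = (\<Sum>j<n. M $$ (j, i) * cmod (v $ j))"
    using M i unfolding nonneg_mat_def by (intro sum.cong) (auto simp: norm_mult)
  finally show ?thesis .
qed

text \<open>For a left eigenvector \<open>(y, z)\<close>: \<open>\<lambda>y = K\<^sup>Ty + z\<close> and \<open>\<lambda>z = L\<^sup>Ty\<close>, so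
  \<open>\<lambda>\<^sup>2y = \<lambda>K\<^sup>Ty + L\<^sup>Ty\<close>; taking moduli and using \<open>|\<lambda>| \<ge> 1\<close> gives \<open>|y| \<le> (K + L)\<^sup>T|y|\<close>.\<close>

lemma block_companion_left_eigvec_abs_subinvariant:
  fixes K L :: "real mat" and v :: "complex vec"
  assumes K: "K \<in> carrier_mat n n" "nonneg_mat K" and L: "L \<in> carrier_mat n n" "nonneg_mat L"
    and v: "v \<in> carrier_vec (n + n)"
    and eig: "transpose_mat (map_mat complex_of_real (four_block_mat K L (1\<^sub>m n) (0\<^sub>m n n))) *\<^sub>v v = l \<cdot>\<^sub>v v"
    and l: "1 \<le> cmod l" and i: "i < n"
  shows "cmod (v $ i) \<le> (transpose_mat (K + L) *\<^sub>v vec n (\<lambda>j. cmod (v $ j))) $ i"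
proof -
  define a b where "a = (\<Sum>j<n. of_real (K $$ (j, i)) * v $ j)" and "b = (\<Sum>j<n. of_real (L $$ (j, i)) * v $ j)"
  define ak bk where "ak = (\<Sum>j<n. K $$ (j, i) * cmod (v $ j))" and "bk = (\<Sum>j<n. L $$ (j, i) * cmod (v $ j))"
  have a: "cmod a \<le> ak" unfolding a_def ak_def by (rule norm_nonneg_mat_col_sum[OF K(2,1) i])
  have b: "cmod b \<le> bk" unfolding b_def bk_def by (rule norm_nonneg_mat_col_sum[OF L(2,1) i])
  have bk: "0 \<le> bk" unfolding bk_def using L i unfolding nonneg_mat_def by (intro sum_nonneg) auto
  have "l * v $ i = a + v $ (n + i)" "b = l * v $ (n + i)"
    using arg_cong[OF eig, of "\<lambda>u. u $ i"] arg_cong[OF eig, of "\<lambda>u. u $ (n + i)"] v i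
      block_companion_transpose_mult_vec[OF K(1) L(1) v i] unfolding a_def b_def by auto
  then have "l * (l * v $ i) = l * a + b" by (simp add: algebra_simps)
  then have "cmod l * (cmod l * cmod (v $ i)) = cmod (l * a + b)" by (metis norm_mult)
  also have "\<dots> \<le> cmod l * cmod a + cmod b" by (metis norm_mult norm_triangle_ineq)
  also have "\<dots> \<le> cmod l * ak + cmod l * bk"
    using mult_left_mono[OF a norm_ge_zero[of l]] b mult_right_mono[OF l bk] by linarith
  finally have "cmod l * (cmod l * cmod (v $ i)) \<le> cmod l * (ak + bk)" by (simp only: distrib_left)
  moreover have "0 < cmod l" using l by linarith
  ultimately have "cmod l * cmod (v $ i) \<le> ak + bk" by (rule mult_left_le_imp_le)
  moreover have "cmod (v $ i) \<le> cmod l * cmod (v $ i)" using mult_right_mono[OF l norm_ge_zero] by simp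
  moreover have "ak + bk = (transpose_mat (K + L) *\<^sub>v vec n (\<lambda>j. cmod (v $ j))) $ i"
    unfolding ak_def bk_def using K L i
    by (simp add: scalar_prod_def sum.distrib algebra_simps atLeast0LessThan)
  ultimately show ?thesis by linarith
qed

lemma block_companion_spectral_radius_lt_1:
  fixes K L X Z Q :: "real mat"
  assumes K: "K \<in> carrier_mat n n" "nonneg_mat K" and L: "L \<in> carrier_mat n n" "nonneg_mat L"
    and X: "X \<in> carrier_mat n m" "nonneg_mat X" and Z: "Z \<in> carrier_mat n m" "nonneg_mat Z"
    and Q: "Q \<in> carrier_mat m n"
    and GZ: "(1\<^sub>m n - (K + L)) * Z = X" and GQ: "K + L = X * Q" and n: "0 < n"
  shows "real_spectral_radius (four_block_mat K L (1\<^sub>m n) (0\<^sub>m n n)) < 1"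
proof -
  define W where "W = map_mat complex_of_real (four_block_mat K L (1\<^sub>m n) (0\<^sub>m n n))"
  have W: "W \<in> carrier_mat (n + n) (n + n)" unfolding W_def using K L by auto
  obtain l where l: "l \<in> spectrum W" and rho: "spectral_radius W = cmod l"
    using spectral_radius_mem_max(1)[OF W] n by auto
  have "cmod l < 1"
  proof (rule ccontr)
    assume "\<not> cmod l < 1"
    then have l1: "1 \<le> cmod l" by simp
    have "eigenvalue (transpose_mat W) l"
      using l W unfolding spectrum_def
      by (simp add: eigenvalue_root_char_poly[of _ "n + n"] char_poly_transpose_mat)
    then obtain v where v: "v \<in> carrier_vec (n + n)" "v \<noteq> 0\<^sub>v (n + n)" "transpose_mat W *\<^sub>v v = l \<cdot>\<^sub>v v"
      unfolding eigenvalue_def eigenvector_def using W by auto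
    define w where "w = vec n (\<lambda>i. cmod (v $ i))"
    have "w = 0\<^sub>v n"
    proof (rule subinvariant_nonneg_vec_eq_zero[OF _ X(1) Z(1) Q _ X(2) Z(2) GZ GQ])
      show "K + L \<in> carrier_mat n n" "nonneg_mat (K + L)" using K L by (auto intro: nonneg_mat_add)
      show "w $ i \<le> (transpose_mat (K + L) *\<^sub>v w) $ i" if "i < n" for i
        unfolding w_def
        using block_companion_left_eigvec_abs_subinvariant[OF K L v(1) v(3)[unfolded W_def] l1 that] that
        by simp
    qed (auto simp: w_def)
    have top: "v $ i = 0" if "i < n" for i
    proof -
      have "w $ i = 0" using \<open>w = 0\<^sub>v n\<close> that by simp
      then show ?thesis using that unfolding w_def by simp
    qed
    have bottom: "v $ (n + i) = 0" if i: "i < n" for i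
      using arg_cong[OF v(3)[unfolded W_def], of "\<lambda>u. u $ i"]
        block_companion_transpose_mult_vec(1)[OF K(1) L(1) v(1) i] top v(1) i by simp
    have "v = 0\<^sub>v (n + n)"
    proof (rule eq_vecI)
      fix p assume "p < dim_vec (0\<^sub>v (n + n) :: complex vec)"
      then show "v $ p = 0\<^sub>v (n + n) $ p"
        using top bottom[of "p - n"] by (cases "p < n") auto
    qed (use v(1) in simp)
    with v(2) show False by simp
  qed
  then show ?thesis unfolding real_spectral_radius_def W_def[symmetric] rho .
qed

section \<open>Two double proper splittings\<close>

lemma double_proper_splitting_carrier:
  assumes "double_proper_splitting A P R S" "A \<in> carrier_mat m n"
  shows "P \<in> carrier_mat m n" "R \<in> carrier_mat m n" "S \<in> carrier_mat m n"
  using assms unfolding double_proper_splitting_def by auto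

lemma splitting_blocks_nonneg:
  assumes A: "A \<in> carrier_mat m n"
    and "(double_proper_regular A P1 R1 S1 \<and> double_proper_regular A P2 R2 S2) \<or>
         (double_proper_weak_regular A P1 R1 S1 \<and> double_proper_weak_regular A P2 R2 S2)"
  shows "nonneg_mat (mp_inverse P2)"
    and "nonneg_mat (mp_inverse P2 * R2 * mp_inverse P1 * R1 - mp_inverse P2 * S2)"
    and "nonneg_mat (- (mp_inverse P2 * R2 * mp_inverse P1 * S1))"
proof -
  define X1 X2 where "X1 = mp_inverse P1" and "X2 = mp_inverse P2"
  have "double_proper_splitting A P1 R1 S1" "double_proper_splitting A P2 R2 S2"
    using assms(2) unfolding double_proper_regular_def double_proper_weak_regular_def by auto
  note P1 = double_proper_splitting_carrier[OF this(1) A]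
    and P2 = double_proper_splitting_carrier[OF this(2) A]
  have d: "dim_row P1 = m" "dim_col P1 = n" "dim_row R1 = m" "dim_col R1 = n"
    "dim_row S1 = m" "dim_col S1 = n" "dim_row P2 = m" "dim_col P2 = n" "dim_row R2 = m"
    "dim_col R2 = n" "dim_row S2 = m" "dim_col S2 = n"
    "dim_row X1 = n" "dim_col X1 = m" "dim_row X2 = n" "dim_col X2 = m"
    using P1 P2 mp_inverse_carrier[OF P1(1)] mp_inverse_carrier[OF P2(1)] unfolding X1_def X2_def by auto
  have blocks: "nonneg_mat (X2 * R2 * X1 * R1 - X2 * S2) \<and> nonneg_mat (- (X2 * R2 * X1 * S1))"
    if "nonneg_mat (X2 * R2 * X1 * R1)" "nonpos_mat (X2 * S2)" "nonpos_mat (X2 * R2 * X1 * S1)"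
    using that by (auto intro!: nonneg_mat_minus nonneg_mat_uminus simp: d)
  from assms(2) have "nonneg_mat X2 \<and> nonneg_mat (X2 * R2 * X1 * R1 - X2 * S2) \<and> nonneg_mat (- (X2 * R2 * X1 * S1))"
  proof
    assume "double_proper_regular A P1 R1 S1 \<and> double_proper_regular A P2 R2 S2"
    then have "nonneg_mat X1" "nonneg_mat R1" "nonpos_mat S1" "nonneg_mat X2" "nonneg_mat R2" "nonpos_mat S2"
      unfolding double_proper_regular_def X1_def X2_def by auto
    moreover from this have "nonneg_mat (X2 * R2 * X1)" by (intro nonneg_mat_mult) (auto simp: d)
    ultimately show ?thesis using blocks by (simp add: nonneg_mat_mult nonpos_mat_mult d)
  next
    assume "double_proper_weak_regular A P1 R1 S1 \<and> double_proper_weak_regular A P2 R2 S2"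
    then have "nonneg_mat (X1 * R1)" "nonpos_mat (X1 * S1)" "nonneg_mat X2" "nonneg_mat (X2 * R2)"
      "nonpos_mat (X2 * S2)"
      unfolding double_proper_weak_regular_def X1_def X2_def by auto
    moreover have "X2 * R2 * X1 * R1 = (X2 * R2) * (X1 * R1)" "X2 * R2 * X1 * S1 = (X2 * R2) * (X1 * S1)"
      by (simp_all add: assoc_mult_mat_dim d)
    ultimately show ?thesis using blocks by (simp add: nonneg_mat_mult nonpos_mat_mult d)
  qed
  then show "nonneg_mat (mp_inverse P2)"
    "nonneg_mat (mp_inverse P2 * R2 * mp_inverse P1 * R1 - mp_inverse P2 * S2)"
    "nonneg_mat (- (mp_inverse P2 * R2 * mp_inverse P1 * S1))"
    unfolding X1_def X2_def by auto
qed

lemma range_null_mat_one_plus_mult: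
  assumes A: "A \<in> carrier_mat m n" and R: "R \<in> carrier_mat m n" and X: "X \<in> carrier_mat n m"
    and range: "range_mat R \<subseteq> range_mat A" and spec: "-1 \<notin> real_spectrum (R * X)"
  shows "range_mat ((1\<^sub>m m + R * X) * A) = range_mat A"
    and "null_mat ((1\<^sub>m m + R * X) * A) = null_mat A"
proof -
  have E: "1\<^sub>m m + R * X \<in> carrier_mat m m" using R X by auto
  have inj: "x = 0\<^sub>v m" if "x \<in> carrier_vec m" "(1\<^sub>m m + R * X) *\<^sub>v x = 0\<^sub>v m" for x
    using one_plus_mult_vec_inj[of "R * X" m x] R X spec that by auto
  show "range_mat ((1\<^sub>m m + R * X) * A) = range_mat A"
    using range_mat_mult_left_inj[OF A E inj] one_plus_mult_preserves_range[OF A R X range] by blast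
  show "null_mat ((1\<^sub>m m + R * X) * A) = null_mat A"
    using null_mat_mult_left_inj[OF A E inj] by blast
qed

text \<open>Since \<open>N(P\<^sub>1) = N(A) = N(P\<^sub>2) \<subseteq> N(R\<^sub>2)\<close>, we have \<open>R\<^sub>2P\<^sub>1\<^sup>\<dagger>P\<^sub>1 = R\<^sub>2\<close>, so expanding
  \<open>A = P\<^sub>1 - R\<^sub>1 + S\<^sub>1\<close> in \<open>R\<^sub>2P\<^sub>1\<^sup>\<dagger>A\<close> produces the \<open>R\<^sub>2\<close> that cancels the one in \<open>A = P\<^sub>2 - R\<^sub>2 + S\<^sub>2\<close>.\<close>

lemma splitting_blocks_sum_eq:
  assumes A: "A \<in> carrier_mat m n"
    and split1: "double_proper_splitting A P1 R1 S1" and split2: "double_proper_splitting A P2 R2 S2"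
    and null: "null_mat P2 \<subseteq> null_mat R2"
  shows "(mp_inverse P2 * R2 * mp_inverse P1 * R1 - mp_inverse P2 * S2)
           + - (mp_inverse P2 * R2 * mp_inverse P1 * S1)
         = mp_inverse P2 * (P2 - (1\<^sub>m m + R2 * mp_inverse P1) * A)"
proof -
  note P1 = double_proper_splitting_carrier[OF split1 A]
    and P2 = double_proper_splitting_carrier[OF split2 A]
  define X1 X2 where "X1 = mp_inverse P1" and "X2 = mp_inverse P2"
  have d: "dim_row P1 = m" "dim_col P1 = n" "dim_row R1 = m" "dim_col R1 = n"
    "dim_row S1 = m" "dim_col S1 = n" "dim_row P2 = m" "dim_col P2 = n" "dim_row R2 = m"
    "dim_col R2 = n" "dim_row S2 = m" "dim_col S2 = n" "dim_row A = m" "dim_col A = n"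
    "dim_row X1 = n" "dim_col X1 = m" "dim_row X2 = n" "dim_col X2 = m"
    using A P1 P2 mp_inverse_carrier[OF P1(1)] mp_inverse_carrier[OF P2(1)]
    unfolding X1_def X2_def by auto
  have A1: "A = P1 - R1 + S1" and A2: "A = P2 - R2 + S2"
    using split1 split2 unfolding double_proper_splitting_def by auto
  have "null_mat P1 \<subseteq> null_mat R2" using split1 split2 null unfolding double_proper_splitting_def by auto
  then have R2X1P1: "R2 * (X1 * P1) = R2" unfolding X1_def by (rule mult_mp_inverse_mult_of_null_subset[OF P1(1) P2(2)])
  have X2A: "X2 * A = X2 * P2 - X2 * R2 + X2 * S2"
    unfolding A2 by (simp add: mat_algebra_dim d)
  have "R2 * (X1 * A) = R2 * (X1 * P1) - R2 * (X1 * R1) + R2 * (X1 * S1)"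
    unfolding A1 by (simp add: mat_algebra_dim d)
  then have X2R2X1A: "X2 * (R2 * (X1 * A)) = X2 * R2 - X2 * (R2 * (X1 * R1)) + X2 * (R2 * (X1 * S1))"
    unfolding R2X1P1 by (simp add: mat_algebra_dim d)
  have X2Ah: "X2 * ((1\<^sub>m m + R2 * X1) * A) = X2 * A + X2 * (R2 * (X1 * A))"
    using A by (simp add: mat_algebra_dim d)
  show ?thesis unfolding X1_def[symmetric] X2_def[symmetric]
  proof (rule eq_matI)
    fix i j assume "i < dim_row (X2 * (P2 - (1\<^sub>m m + R2 * X1) * A))"
      "j < dim_col (X2 * (P2 - (1\<^sub>m m + R2 * X1) * A))"
    then have i: "i < n" and j: "j < n" by (auto simp: d)
    have X2Q: "X2 * (P2 - (1\<^sub>m m + R2 * X1) * A) = X2 * P2 - X2 * ((1\<^sub>m m + R2 * X1) * A)"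
      by (simp add: mult_minus_distrib_dim d)
    note entry = arg_cong[where f = "\<lambda>M. M $$ (i, j)"]
    from entry[OF X2Q] entry[OF X2Ah] entry[OF X2A] entry[OF X2R2X1A] i j
    show "((X2 * R2 * X1 * R1 - X2 * S2) + - (X2 * R2 * X1 * S1)) $$ (i, j)
      = (X2 * (P2 - (1\<^sub>m m + R2 * X1) * A)) $$ (i, j)"
      by (simp add: d assoc_mult_mat_dim)
  qed (auto simp: d)
qed

theorem theorem3p3:
  fixes A P1 R1 S1 P2 R2 S2 :: "real mat" and m n :: nat
  assumes "A \<in> carrier_mat m n" and "0 < m" and "0 < n"
    and "(double_proper_regular A P1 R1 S1 \<and> double_proper_regular A P2 R2 S2) \<or>
         (double_proper_weak_regular A P1 R1 S1 \<and> double_proper_weak_regular A P2 R2 S2)"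
    and "null_mat P2 \<subseteq> null_mat R2"
    and "range_mat R2 \<subseteq> range_mat P2"
    and "-1 \<notin> real_spectrum (R2 * mp_inverse P1)"
    and "nonneg_mat (mp_inverse ((1\<^sub>m m + R2 * mp_inverse P1) * A))"
  shows "real_spectral_radius
           (four_block_mat
              (mp_inverse P2 * R2 * mp_inverse P1 * R1 - mp_inverse P2 * S2)
              (- (mp_inverse P2 * R2 * mp_inverse P1 * S1))
              (1\<^sub>m n) (0\<^sub>m n n)) < 1"
proof -
  have split1: "double_proper_splitting A P1 R1 S1" and split2: "double_proper_splitting A P2 R2 S2"
    using assms(4) unfolding double_proper_regular_def double_proper_weak_regular_def by auto
  note P1 = double_proper_splitting_carrier[OF split1 assms(1)]
    and P2 = double_proper_splitting_carrier[OF split2 assms(1)]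
  note X1 = mp_inverse_carrier[OF P1(1)] and X2 = mp_inverse_carrier[OF P2(1)]
  define Ah where "Ah = (1\<^sub>m m + R2 * mp_inverse P1) * A"
  have Ah: "Ah \<in> carrier_mat m n" unfolding Ah_def using assms(1) P2 X1 by auto
  have "range_mat Ah = range_mat P2" "null_mat Ah = null_mat P2"
    using range_null_mat_one_plus_mult[OF assms(1) P2(2) X1] assms(6,7) split2
    unfolding Ah_def double_proper_splitting_def by auto
  then have GZ: "(1\<^sub>m n - mp_inverse P2 * (P2 - Ah)) * mp_inverse Ah = mp_inverse P2"
    using one_minus_mp_inverse_diff_mult_mp_inverse[OF P2(1) Ah] by simp
  have G: "(mp_inverse P2 * R2 * mp_inverse P1 * R1 - mp_inverse P2 * S2)
      + - (mp_inverse P2 * R2 * mp_inverse P1 * S1) = mp_inverse P2 * (P2 - Ah)"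
    unfolding Ah_def by (rule splitting_blocks_sum_eq[OF assms(1) split1 split2 assms(5)])
  have "mp_inverse P2 * R2 * mp_inverse P1 * R1 - mp_inverse P2 * S2 \<in> carrier_mat n n"
    "- (mp_inverse P2 * R2 * mp_inverse P1 * S1) \<in> carrier_mat n n" "P2 - Ah \<in> carrier_mat m n"
    using X1 X2 P1 P2 Ah by auto
  with splitting_blocks_nonneg[OF assms(1,4)] show ?thesis
    using block_companion_spectral_radius_lt_1[OF _ _ _ _ X2 _ mp_inverse_carrier[OF Ah]
          assms(8)[folded Ah_def] _ GZ[folded G] G assms(3)] by blast
qed

end
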